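(* Let $S$ be a monoid and let $r$ be a Hoehnke radical of $S$-acts such that (i) $r(A)$ is a Rees congruence for every $S$-act $A$, and (ii) $r(B)=\nabla_B$ for every $S$-act $A$ and every $B\in\Sigma_{r(A)}$. Then $r$ also satisfies: (iii) for every $S$-act $A$, every $\mathbb{R}_r$-system $\Sigma$ of $A$ and every $B\in\Sigma$, there exists $C\in\Sigma_{r(A)}$ with $B\le C$. That is, $r$ is a Kurosh–Amitsur radical.
   Context: An $S$-act over a monoid $S$ is a set $A$ with an action $(s,a)\mapsto sa$ satisfying $s(ta)=(st)a$ and $1a=a$; homomorphisms are action-preserving maps. An $S$-act is trivial if $|A|\le1$. Congruences are action-compatible equivalence relations; $\Delta_A$ and $\nabla_A=A\times A$ are the least and greatest congruences on $A$, and for a subact $B$, $\nabla_B=B\times B$. A Rees congruence is a congruence each of whose classes is a subact or a singleton; $\Sigma_\rho$ is the set of classes of $\rho$ that are non-trivial subacts. A (normal) Hoehnke radical is an assignment $r$ giving each $S$-act $A$ a congruence $r(A)$ such that (a) for every homomorphism $f:A\to B$, $(a,a')\in r(A)$ implies $(f(a),f(a'))\in r(B)$, and (b) $r(A/r(A))=\Delta_{A/r(A)}$. $\mathbb{R}_r=\{A: r(A)=\nabla_A\}$. An $\mathbb{R}_r$-system of $A$ is a set of pairwise disjoint non-trivial subacts of $A$ each belonging to $\mathbb{R}_r$. A Kurosh–Amitsur radical is a Hoehnke radical satisfying (i), (ii) and (iii). *)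

theory Defs
  imports Main
begin

text \<open>S-acts over a monoid S (the type 'm). An S-act is a carrier A :: 'a set
  together with an action act :: 'm \<Rightarrow> 'a \<Rightarrow> 'a; only its values on A matter.\<close>

definition is_act :: "'a set \<Rightarrow> ('m::monoid_mult \<Rightarrow> 'a \<Rightarrow> 'a) \<Rightarrow> bool" where
  "is_act A act \<longleftrightarrow>
     (\<forall>s. \<forall>a\<in>A. act s a \<in> A) \<and>
     (\<forall>s t. \<forall>a\<in>A. act s (act t a) = act (s * t) a) \<and>
     (\<forall>a\<in>A. act 1 a = a)"

definition act_hom ::
  "'a set \<Rightarrow> ('m::monoid_mult \<Rightarrow> 'a \<Rightarrow> 'a) \<Rightarrow> 'b set \<Rightarrow> ('m \<Rightarrow> 'b \<Rightarrow> 'b) \<Rightarrow> ('a \<Rightarrow> 'b) \<Rightarrow> bool" where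
  "act_hom A act B act' f \<longleftrightarrow> f ` A \<subseteq> B \<and> (\<forall>s. \<forall>a\<in>A. f (act s a) = act' s (f a))"

definition act_congruence :: "'a set \<Rightarrow> ('m::monoid_mult \<Rightarrow> 'a \<Rightarrow> 'a) \<Rightarrow> ('a \<times> 'a) set \<Rightarrow> bool" where
  "act_congruence A act \<rho> \<longleftrightarrow> equiv A \<rho> \<and> (\<forall>s. \<forall>(a, b)\<in>\<rho>. (act s a, act s b) \<in> \<rho>)"

definition subact :: "'a set \<Rightarrow> 'a set \<Rightarrow> ('m::monoid_mult \<Rightarrow> 'a \<Rightarrow> 'a) \<Rightarrow> bool" where
  "subact B A act \<longleftrightarrow> B \<subseteq> A \<and> (\<forall>s. \<forall>b\<in>B. act s b \<in> B)"

definition trivial_set :: "'a set \<Rightarrow> bool" where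
  "trivial_set B \<longleftrightarrow> (\<forall>x\<in>B. \<forall>y\<in>B. x = y)"

definition rees_congruence :: "'a set \<Rightarrow> ('m::monoid_mult \<Rightarrow> 'a \<Rightarrow> 'a) \<Rightarrow> ('a \<times> 'a) set \<Rightarrow> bool" where
  "rees_congruence A act \<rho> \<longleftrightarrow> act_congruence A act \<rho> \<and>
     (\<forall>X \<in> A // \<rho>. subact X A act \<or> (\<exists>x. X = {x}))"

definition Sigma_classes :: "'a set \<Rightarrow> ('m::monoid_mult \<Rightarrow> 'a \<Rightarrow> 'a) \<Rightarrow> ('a \<times> 'a) set \<Rightarrow> 'a set set" where
  "Sigma_classes A act \<rho> = {X \<in> A // \<rho>. subact X A act \<and> \<not> trivial_set X}"

text \<open>Condition (b), r(A/r(A)) = \<Delta>, is stated invariantly: any surjective homomorphic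
  image of A whose kernel is r(A) (i.e. any copy of A/r(A)) has trivial radical.\<close>
definition hoehnke_radical ::
  "('a set \<Rightarrow> ('m::monoid_mult \<Rightarrow> 'a \<Rightarrow> 'a) \<Rightarrow> ('a \<times> 'a) set) \<Rightarrow> bool" where
  "hoehnke_radical r \<longleftrightarrow>
     (\<forall>A act. is_act A act \<longrightarrow> act_congruence A act (r A act)) \<and>
     (\<forall>A act B act' f. is_act A act \<longrightarrow> is_act B act' \<longrightarrow> act_hom A act B act' f \<longrightarrow>
        (\<forall>(a, a') \<in> r A act. (f a, f a') \<in> r B act')) \<and>
     (\<forall>A act B act' f. is_act A act \<longrightarrow> is_act B act' \<longrightarrow> act_hom A act B act' f \<longrightarrow>
        f ` A = B \<longrightarrow> (\<forall>a\<in>A. \<forall>a'\<in>A. f a = f a' \<longleftrightarrow> (a, a') \<in> r A act) \<longrightarrow>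
        r B act' = Id_on B)"

definition radical_class ::
  "('a set \<Rightarrow> ('m::monoid_mult \<Rightarrow> 'a \<Rightarrow> 'a) \<Rightarrow> ('a \<times> 'a) set) \<Rightarrow> 'a set \<Rightarrow> ('m \<Rightarrow> 'a \<Rightarrow> 'a) \<Rightarrow> bool" where
  "radical_class r A act \<longleftrightarrow> r A act = A \<times> A"

definition R_system ::
  "('a set \<Rightarrow> ('m::monoid_mult \<Rightarrow> 'a \<Rightarrow> 'a) \<Rightarrow> ('a \<times> 'a) set) \<Rightarrow> 'a set \<Rightarrow> ('m \<Rightarrow> 'a \<Rightarrow> 'a) \<Rightarrow> 'a set set \<Rightarrow> bool" where
  "R_system r A act \<Sigma> \<longleftrightarrow>
     (\<forall>B\<in>\<Sigma>. subact B A act \<and> \<not> trivial_set B \<and> radical_class r B act) \<and>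
     (\<forall>B\<in>\<Sigma>. \<forall>C\<in>\<Sigma>. B \<noteq> C \<longrightarrow> B \<inter> C = {})"

definition cond_i :: "('a set \<Rightarrow> ('m::monoid_mult \<Rightarrow> 'a \<Rightarrow> 'a) \<Rightarrow> ('a \<times> 'a) set) \<Rightarrow> bool" where
  "cond_i r \<longleftrightarrow> (\<forall>A act. is_act A act \<longrightarrow> rees_congruence A act (r A act))"

definition cond_ii :: "('a set \<Rightarrow> ('m::monoid_mult \<Rightarrow> 'a \<Rightarrow> 'a) \<Rightarrow> ('a \<times> 'a) set) \<Rightarrow> bool" where
  "cond_ii r \<longleftrightarrow> (\<forall>A act. is_act A act \<longrightarrow>
     (\<forall>B \<in> Sigma_classes A act (r A act). r B act = B \<times> B))"

definition cond_iii :: "('a set \<Rightarrow> ('m::monoid_mult \<Rightarrow> 'a \<Rightarrow> 'a) \<Rightarrow> ('a \<times> 'a) set) \<Rightarrow> bool" where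
  "cond_iii r \<longleftrightarrow> (\<forall>A act. is_act A act \<longrightarrow> (\<forall>\<Sigma>. R_system r A act \<Sigma> \<longrightarrow>
     (\<forall>B\<in>\<Sigma>. \<exists>C \<in> Sigma_classes A act (r A act). B \<subseteq> C)))"

definition kurosh_amitsur_radical ::
  "('a set \<Rightarrow> ('m::monoid_mult \<Rightarrow> 'a \<Rightarrow> 'a) \<Rightarrow> ('a \<times> 'a) set) \<Rightarrow> bool" where
  "kurosh_amitsur_radical r \<longleftrightarrow> hoehnke_radical r \<and> cond_i r \<and> cond_ii r \<and> cond_iii r"

end

theory Submission
  imports Defs
begin

text \<open>If \<open>B\<close> is a non-trivial subact of \<open>A\<close> with \<open>r(B) = \<nabla>\<^sub>B\<close>, then, the inclusion
  \<open>B \<rightarrow> A\<close> being a homomorphism, \<open>\<nabla>\<^sub>B \<subseteq> r(A)\<close>: so \<open>B\<close> lies in one class of \<open>r(A)\<close>. That class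
  is non-trivial, hence by (i) a subact, i.e. a member of \<open>\<Sigma>\<close> of \<open>r(A)\<close>.\<close>

lemma subact_is_act:
  assumes "is_act A act" and "subact B A act"
  shows "is_act B act"
  using assms unfolding is_act_def subact_def by blast

lemma act_hom_subact_inclusion:
  assumes "subact B A act"
  shows "act_hom B act A act id"
  using assms unfolding act_hom_def subact_def by auto

lemma hoehnke_radical_subact_le:
  assumes "hoehnke_radical r" and "is_act A act" and "subact B A act"
  shows "r B act \<subseteq> r A act"
proof -
  have "is_act B act" using assms(2,3) by (rule subact_is_act)
  moreover have "act_hom B act A act id" using assms(3) by (rule act_hom_subact_inclusion)
  ultimately have "\<forall>(a, a') \<in> r B act. (id a, id a') \<in> r A act"
    using assms(1,2) unfolding hoehnke_radical_def by blast
  then show ?thesis by auto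
qed

lemma nontrivial_rees_class_in_Sigma_classes:
  assumes "rees_congruence A act \<rho>" and "X \<in> A // \<rho>" and "\<not> trivial_set X"
  shows "X \<in> Sigma_classes A act \<rho>"
proof -
  have "\<not> (\<exists>x. X = {x})" using assms(3) unfolding trivial_set_def by auto
  then have "subact X A act" using assms(1,2) unfolding rees_congruence_def by blast
  then show ?thesis using assms(2,3) unfolding Sigma_classes_def by blast
qed

lemma cond_iii_if_rees:
  assumes "hoehnke_radical r" and "cond_i r"
  shows "cond_iii r"
  unfolding cond_iii_def
proof (intro allI impI ballI)
  fix A act \<Sigma> B
  assume A: "is_act A act" and "R_system r A act \<Sigma>" and "B \<in> \<Sigma>"
  then have sub: "subact B A act" and nt: "\<not> trivial_set B" and rB: "r B act = B \<times> B"
    unfolding R_system_def radical_class_def by auto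
  from nt obtain b where b: "b \<in> B" unfolding trivial_set_def by auto
  define C where "C = r A act `` {b}"
  have "B \<times> B \<subseteq> r A act"
    using hoehnke_radical_subact_le[OF assms(1) A sub] rB by simp
  then have BC: "B \<subseteq> C" unfolding C_def using b by auto
  have "C \<in> A // r A act"
    unfolding C_def using b sub by (intro quotientI) (auto simp: subact_def)
  moreover have "\<not> trivial_set C" using nt BC unfolding trivial_set_def by blast
  moreover have "rees_congruence A act (r A act)" using assms(2) A unfolding cond_i_def by blast
  ultimately have "C \<in> Sigma_classes A act (r A act)"
    by (intro nontrivial_rees_class_in_Sigma_classes)
  with BC show "\<exists>C \<in> Sigma_classes A act (r A act). B \<subseteq> C" by blast
qed

theorem corollary2p6:
  fixes r :: "'a set \<Rightarrow> ('m::monoid_mult \<Rightarrow> 'a \<Rightarrow> 'a) \<Rightarrow> ('a \<times> 'a) set"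
  assumes "hoehnke_radical r"
    and "cond_i r"
    and "cond_ii r"
  shows "cond_iii r \<and> kurosh_amitsur_radical r"
  using cond_iii_if_rees[OF assms(1,2)] assms unfolding kurosh_amitsur_radical_def by blast

end
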